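(* In the setting below, fix $k,d\in\mathbb N$, let $\omega$ be the smallest integer with $2\omega\ge\max\{\deg f,\deg g_1,\ldots,\deg g_m\}$, and assume $2\omega\le d_{\max}$. Let $((\boldsymbol\theta^{*\ell})_{\ell=1}^p,\mathbf y^* )$ be an optimal solution of the dual program defining $\tilde q^k_d$. If $\operatorname{rank}\mathbf M_\omega(\boldsymbol\theta^{*\ell})=1$ for every $\ell=1,\ldots,p$, then $\tilde q^k_d=f^*$ and $\mathbf x^*:=(y^*_{e_1},\ldots,y^*_{e_n})$ (where $e_i$ is the $i$-th unit multi-index) is an optimal solution of (P).
   Context: Problem (P): $f^*=\min\{f(\mathbf x):\mathbf x\in\mathbf K\}$ with $\mathbf K=\{\mathbf x\in\mathbb R^n:0\le g_j(\mathbf x)\le 1,\ j=1,\ldots,m\}$, $f,g_j\in\mathbb R[\mathbf x]$ ($f^*=+\infty$ if $\mathbf K=\emptyset$). $\mathbb R[\mathbf x;I]$ is the ring of polynomials in $\{x_i:i\in I\}$. Sparsity Assumption: there are $p\in\mathbb N$ and sets $I_\ell\subseteq\{1,\ldots,n\}$, $J_\ell\subseteq\{1,\ldots,m\}$ with $f=\sum_\ell f^\ell$ for some $f^\ell\in\mathbb R[\mathbf x;I_\ell]$, $g_j\in\mathbb R[\mathbf x;I_\ell]$ for $j\in J_\ell$, $\bigcup_\ell I_\ell=\{1,\ldots,n\}$, $\bigcup_\ell J_\ell=\{1,\ldots,m\}$, and for every $\ell\le p-1$ some $s\le\ell$ with $I_{\ell+1}\cap\bigcup_{r\le\ell}I_r\subseteq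 I_s$. $h_{\alpha\beta}=\prod_j g_j^{\alpha_j}(1-g_j)^{\beta_j}$; $N^\ell_d=\{(\alpha,\beta)\in\mathbb N_0^m\times\mathbb N_0^m:\mathrm{supp}(\alpha)\cup\mathrm{supp}(\beta)\subseteq J_\ell,\ \sum_j(\alpha_j+\beta_j)\le d\}$; $d_{\max}=\max\{\deg f,2k,d\max_j\deg g_j\}$. Let $\mathcal I_\ell=\{\gamma\in\mathbb N_0^n:|\gamma|\le d_{\max},\ \mathrm{supp}(\gamma)\subseteq I_\ell\}$, $\Gamma=\bigcup_\ell\mathcal I_\ell$. For a sequence $\boldsymbol\theta=(\theta_\gamma)$, $L_{\boldsymbol\theta}(\sum_\gamma q_\gamma\mathbf x^\gamma)=\sum_\gamma q_\gamma\theta_\gamma$, and for $t$ with $2t\le d_{\max}$, $\mathbf M_t(\boldsymbol\theta^\ell)$ is the matrix indexed by $\alpha,\beta\in\mathcal I_\ell$ with $|\alpha|,|\beta|\le t$, with entries $\theta^\ell_{\alpha+\beta}$. Dual program: $\tilde q^k_d=\inf\{L_{\mathbf y}(f):\mathbf y=(y_\gamma)_{\gamma\in\Gamma},\ \boldsymbol\theta^\ell=(\theta^\ell_\gamma)_{\gamma\in\mathcal I_\ell},\ y_\gamma=\theta^\ell_\gamma\ \forall\ell,\ \gamma\in\mathcal I_\ell,\ y_0=1,\ \mathbf M_k(\boldsymbol\theta^\ell)\succeq0,\ L_{\boldsymbol\theta^\ell}(h_{\alpha\beta})\ge0\ \forall(\alpha,\beta)\in N^\ell_d,\ \ell=1,\ldots,p\}$.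 *)

theory Defs
  imports "Jordan_Normal_Form.DL_Rank" "HOL-Library.Poly_Mapping" "HOL-Library.Extended_Real"
begin

text \<open>Multivariate real polynomials in the variables x_1, x_2, ... are represented as
finitely supported maps from monomial exponents (finitely supported nat => nat maps)
to real coefficients; the ring structure is the convolution ring of Poly_Mapping.\<close>

type_synonym mono = "nat \<Rightarrow>\<^sub>0 nat"
type_synonym mpoly = "mono \<Rightarrow>\<^sub>0 real"

definition mdeg :: "mono \<Rightarrow> nat" where
  "mdeg \<gamma> = (\<Sum>i\<in>Poly_Mapping.keys \<gamma>. Poly_Mapping.lookup \<gamma> i)"

definition pvars :: "mpoly \<Rightarrow> nat set" where
  "pvars q = (\<Union>\<gamma>\<in>Poly_Mapping.keys q. Poly_Mapping.keys \<gamma>)"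

definition pdeg :: "mpoly \<Rightarrow> nat" where
  "pdeg q = Max (insert 0 (mdeg ` Poly_Mapping.keys q))"

definition peval :: "mpoly \<Rightarrow> (nat \<Rightarrow> real) \<Rightarrow> real" where
  "peval q x = (\<Sum>\<gamma>\<in>Poly_Mapping.keys q. Poly_Mapping.lookup q \<gamma> * (\<Prod>i\<in>Poly_Mapping.keys \<gamma>. x i ^ Poly_Mapping.lookup \<gamma> i))"

definition Lfun :: "(mono \<Rightarrow> real) \<Rightarrow> mpoly \<Rightarrow> real" where
  "Lfun \<theta> q = (\<Sum>\<gamma>\<in>Poly_Mapping.keys q. Poly_Mapping.lookup q \<gamma> * \<theta> \<gamma>)"

definition hab :: "nat \<Rightarrow> (nat \<Rightarrow> mpoly) \<Rightarrow> (nat \<Rightarrow> nat) \<Rightarrow> (nat \<Rightarrow> nat) \<Rightarrow> mpoly" where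
  "hab m g \<alpha> \<beta> = (\<Prod>j\<in>{1..m}. g j ^ \<alpha> j * (1 - g j) ^ \<beta> j)"

definition Nset :: "nat set \<Rightarrow> nat \<Rightarrow> ((nat \<Rightarrow> nat) \<times> (nat \<Rightarrow> nat)) set" where
  "Nset J d = {(\<alpha>, \<beta>). {j. \<alpha> j \<noteq> 0} \<union> {j. \<beta> j \<noteq> 0} \<subseteq> J \<and> (\<Sum>j\<in>J. \<alpha> j + \<beta> j) \<le> d}"

definition dmax :: "mpoly \<Rightarrow> (nat \<Rightarrow> mpoly) \<Rightarrow> nat \<Rightarrow> nat \<Rightarrow> nat \<Rightarrow> nat" where
  "dmax f g m k d = max (pdeg f) (max (2 * k) (d * Max (insert 0 (pdeg ` g ` {1..m}))))"

definition Iset :: "nat set \<Rightarrow> nat \<Rightarrow> mono set" where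
  "Iset I D = {\<gamma>. mdeg \<gamma> \<le> D \<and> Poly_Mapping.keys \<gamma> \<subseteq> I}"

definition mom_psd :: "nat set \<Rightarrow> nat \<Rightarrow> (mono \<Rightarrow> real) \<Rightarrow> bool" where
  "mom_psd I t \<theta> \<longleftrightarrow> (\<forall>v :: mono \<Rightarrow> real.
      0 \<le> (\<Sum>\<alpha>\<in>Iset I t. \<Sum>\<beta>\<in>Iset I t. v \<alpha> * \<theta> (\<alpha> + \<beta>) * v \<beta>))"

definition mom_mat :: "nat set \<Rightarrow> nat \<Rightarrow> (mono \<Rightarrow> real) \<Rightarrow> real mat" where
  "mom_mat I t \<theta> = (let xs = sorted_list_of_set (Iset I t)
     in mat (length xs) (length xs) (\<lambda>(i, j). \<theta> (xs ! i + xs ! j)))"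

definition mom_rank :: "nat set \<Rightarrow> nat \<Rightarrow> (mono \<Rightarrow> real) \<Rightarrow> nat" where
  "mom_rank I t \<theta> = vec_space.rank (card (Iset I t)) (mom_mat I t \<theta>)"

definition dual_feasible ::
  "nat \<Rightarrow> (nat \<Rightarrow> nat set) \<Rightarrow> (nat \<Rightarrow> nat set) \<Rightarrow> mpoly \<Rightarrow> (nat \<Rightarrow> mpoly) \<Rightarrow> nat \<Rightarrow> nat \<Rightarrow> nat
   \<Rightarrow> (nat \<Rightarrow> mono \<Rightarrow> real) \<Rightarrow> (mono \<Rightarrow> real) \<Rightarrow> bool" where
  "dual_feasible p I J f g m k d \<theta> y \<longleftrightarrow>
     (\<forall>l\<in>{1..p}. \<forall>\<gamma>\<in>Iset (I l) (dmax f g m k d). y \<gamma> = \<theta> l \<gamma>) \<and>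
     y 0 = 1 \<and>
     (\<forall>l\<in>{1..p}. mom_psd (I l) k (\<theta> l)) \<and>
     (\<forall>l\<in>{1..p}. \<forall>(\<alpha>, \<beta>)\<in>Nset (J l) d. 0 \<le> Lfun (\<theta> l) (hab m g \<alpha> \<beta>))"

definition qtilde ::
  "nat \<Rightarrow> (nat \<Rightarrow> nat set) \<Rightarrow> (nat \<Rightarrow> nat set) \<Rightarrow> mpoly \<Rightarrow> (nat \<Rightarrow> mpoly) \<Rightarrow> nat \<Rightarrow> nat \<Rightarrow> nat \<Rightarrow> ereal" where
  "qtilde p I J f g m k d =
     (INF (\<theta>, y) \<in> {(\<theta>, y). dual_feasible p I J f g m k d \<theta> y}. ereal (Lfun y f))"

text \<open>Feasible set K of (P), as points of R^n (coordinates 1..n; other coordinates are 0).\<close>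
definition Kset :: "nat \<Rightarrow> nat \<Rightarrow> (nat \<Rightarrow> mpoly) \<Rightarrow> (nat \<Rightarrow> real) set" where
  "Kset n m g = {x. (\<forall>i. i \<notin> {1..n} \<longrightarrow> x i = 0) \<and>
      (\<forall>j\<in>{1..m}. 0 \<le> peval (g j) x \<and> peval (g j) x \<le> 1)}"

text \<open>f^* (= +infinity if K is empty).\<close>
definition fstar :: "nat \<Rightarrow> nat \<Rightarrow> mpoly \<Rightarrow> (nat \<Rightarrow> mpoly) \<Rightarrow> ereal" where
  "fstar n m f g = (INF x \<in> Kset n m g. ereal (peval f x))"

definition omega :: "nat \<Rightarrow> mpoly \<Rightarrow> (nat \<Rightarrow> mpoly) \<Rightarrow> nat" where
  "omega m f g = (LEAST w. max (pdeg f) (Max (insert 0 (pdeg ` g ` {1..m}))) \<le> 2 * w)"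

end

theory Submission
  imports Defs
begin

text \<open>A moment matrix of rank one with \<open>\<theta> 0 = 1\<close> satisfies \<open>\<theta>(\<alpha> + \<beta>) = \<theta> \<alpha> * \<theta> \<beta>\<close>
(its 2x2 minors through the entry \<open>\<theta> 0\<close> vanish), so on each clique \<open>\<theta>\<^sup>\<ell>\<close> agrees up to
degree \<open>2\<omega>\<close> with the moments of the Dirac measure at \<open>x\<^sup>*\<close>. Hence \<open>L\<^sub>y(f) = f(x\<^sup>*)\<close>, and the
localizing constraints for \<open>g\<^sub>j\<close> and \<open>1 - g\<^sub>j\<close> become \<open>0 \<le> g\<^sub>j(x\<^sup>*) \<le> 1\<close>, so \<open>x\<^sup>* \<in> K\<close> and
\<open>f\<^sup>* \<le> f(x\<^sup>*) = L\<^sub>y(f)\<close>. Conversely, the Dirac moments of any point of \<open>K\<close> are dual feasible,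
so \<open>L\<^sub>y(f) \<le> f\<^sup>*\<close>.\<close>

definition meval :: "(nat \<Rightarrow> real) \<Rightarrow> mono \<Rightarrow> real" where
  "meval x \<gamma> = (\<Prod>i\<in>Poly_Mapping.keys \<gamma>. x i ^ Poly_Mapping.lookup \<gamma> i)"

lemma meval_superset:
  "finite S \<Longrightarrow> Poly_Mapping.keys \<gamma> \<subseteq> S \<Longrightarrow> meval x \<gamma> = (\<Prod>i\<in>S. x i ^ Poly_Mapping.lookup \<gamma> i)"
  unfolding meval_def by (rule prod.mono_neutral_left) (auto simp: in_keys_iff)

lemma meval_zero [simp]: "meval x 0 = 1"
  by (simp add: meval_def)

lemma meval_single [simp]: "meval x (Poly_Mapping.single i k) = x i ^ k"
  by (simp add: meval_def)

lemma meval_add: "meval x (\<alpha> + \<beta>) = meval x \<alpha> * meval x \<beta>"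
proof -
  let ?S = "Poly_Mapping.keys \<alpha> \<union> Poly_Mapping.keys \<beta>"
  have "meval x (\<alpha> + \<beta>) = (\<Prod>i\<in>?S. x i ^ Poly_Mapping.lookup (\<alpha> + \<beta>) i)"
    using keys_add[of \<alpha> \<beta>] by (intro meval_superset) auto
  also have "\<dots> = (\<Prod>i\<in>?S. x i ^ Poly_Mapping.lookup \<alpha> i) * (\<Prod>i\<in>?S. x i ^ Poly_Mapping.lookup \<beta> i)"
    by (simp add: lookup_add power_add prod.distrib)
  also have "\<dots> = meval x \<alpha> * meval x \<beta>"
    by (subst (1 2) meval_superset[of ?S]) auto
  finally show ?thesis .
qed

lemma mdeg_single [simp]: "mdeg (Poly_Mapping.single i k) = k"
  by (simp add: mdeg_def)

lemma mdeg_zero [simp]: "mdeg 0 = 0"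
  by (simp add: mdeg_def)

lemma mdeg_eq_0_iff [simp]: "mdeg \<gamma> = 0 \<longleftrightarrow> \<gamma> = 0"
  by (auto simp: mdeg_def in_keys_iff intro: poly_mapping_eqI)

lemma mdeg_add: "mdeg (\<alpha> + \<beta>) = mdeg \<alpha> + mdeg \<beta>"
  using setsum_keys_plus_distrib[of "\<lambda>_ c. c" \<alpha> \<beta>] by (simp add: mdeg_def lookup_add)

lemma lookup_le_mdeg: "Poly_Mapping.lookup \<gamma> i \<le> mdeg \<gamma>"
  by (cases "i \<in> Poly_Mapping.keys \<gamma>") (auto simp: mdeg_def in_keys_iff intro: member_le_sum)

lemma keys_add_nat: "Poly_Mapping.keys (\<alpha> + \<beta>) = Poly_Mapping.keys \<alpha> \<union> Poly_Mapping.keys (\<beta> :: 'a \<Rightarrow>\<^sub>0 nat)"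
  by (auto simp: in_keys_iff lookup_add)

lemma diff_single_add_single:
  "i \<in> Poly_Mapping.keys (\<gamma> :: 'a \<Rightarrow>\<^sub>0 nat) \<Longrightarrow> \<gamma> - Poly_Mapping.single i 1 + Poly_Mapping.single i 1 = \<gamma>"
  by (rule poly_mapping_eqI) (auto simp: lookup_add lookup_minus lookup_single when_def in_keys_iff)

lemma mdeg_decompose:
  assumes "a \<le> mdeg \<gamma>"
  obtains \<alpha> \<beta> where "\<gamma> = \<alpha> + \<beta>" "mdeg \<alpha> = a"
  using assms
proof (induction a arbitrary: thesis)
  case 0
  show ?case by (rule "0.prems"(1)[of 0 \<gamma>]) simp_all
next
  case (Suc a)
  then obtain \<alpha> \<beta> where ab: "\<gamma> = \<alpha> + \<beta>" "mdeg \<alpha> = a" by (metis Suc_leD)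
  with Suc.prems have "\<beta> \<noteq> 0" by (auto simp: mdeg_add)
  then obtain i where "i \<in> Poly_Mapping.keys \<beta>" by fastforce
  then have "\<gamma> = (\<alpha> + Poly_Mapping.single i 1) + (\<beta> - Poly_Mapping.single i 1)"
    using ab(1) diff_single_add_single by (metis add.assoc add.commute)
  moreover have "mdeg (\<alpha> + Poly_Mapping.single i 1) = Suc a"
    unfolding mdeg_add ab(2) mdeg_single by simp
  ultimately show ?case by (rule Suc.prems(1))
qed

lemma finite_Iset: assumes "finite I" shows "finite (Iset I D)"
proof -
  let ?r = "\<lambda>\<gamma>. restrict (Poly_Mapping.lookup \<gamma>) I"
  have "inj_on ?r (Iset I D)"
  proof (rule inj_onI)
    fix \<alpha> \<beta> assume \<alpha>: "\<alpha> \<in> Iset I D" and \<beta>: "\<beta> \<in> Iset I D" and r: "?r \<alpha> = ?r \<beta>"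
    have "Poly_Mapping.lookup \<alpha> i = Poly_Mapping.lookup \<beta> i" for i
    proof (cases "i \<in> I")
      case True
      then show ?thesis using fun_cong[OF r, of i] by simp
    next
      case False
      with \<alpha> \<beta> have "i \<notin> Poly_Mapping.keys \<alpha>" "i \<notin> Poly_Mapping.keys \<beta>"
        unfolding Iset_def by blast+
      then show ?thesis by (simp add: not_in_keys_iff_lookup_eq_zero)
    qed
    then show "\<alpha> = \<beta>" by (rule poly_mapping_eqI)
  qed
  moreover have "?r \<gamma> \<in> PiE I (\<lambda>_. {0..D})" if "\<gamma> \<in> Iset I D" for \<gamma>
    using le_trans[OF lookup_le_mdeg] that by (simp add: restrict_PiE_iff Iset_def)
  moreover have "finite (PiE I (\<lambda>_. {0..D}))"
    using assms by (intro finite_PiE) auto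
  ultimately show ?thesis
    by (metis finite_imageD finite_subset image_subsetI)
qed

lemma Lfun_cong: "(\<And>\<gamma>. \<gamma> \<in> Poly_Mapping.keys q \<Longrightarrow> \<theta> \<gamma> = \<theta>' \<gamma>) \<Longrightarrow> Lfun \<theta> q = Lfun \<theta>' q"
  by (simp add: Lfun_def)

lemma Lfun_zero [simp]: "Lfun \<theta> 0 = 0"
  by (simp add: Lfun_def)

lemma Lfun_one [simp]: "Lfun \<theta> 1 = \<theta> 0"
  by (simp add: Lfun_def)

lemma Lfun_single [simp]: "Lfun \<theta> (Poly_Mapping.single \<gamma> c) = c * \<theta> \<gamma>"
  by (simp add: Lfun_def)

lemma Lfun_add: "Lfun \<theta> (p + q) = Lfun \<theta> p + Lfun \<theta> q"
  using setsum_keys_plus_distrib[of "\<lambda>\<gamma> c. c * \<theta> \<gamma>" p q] by (simp add: Lfun_def lookup_add distrib_right)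

lemma Lfun_diff: "Lfun \<theta> (p - q) = Lfun \<theta> p - Lfun \<theta> q"
  using Lfun_add[of \<theta> "p - q" q] by simp

lemma Lfun_sum: "Lfun \<theta> (\<Sum>a\<in>A. P a) = (\<Sum>a\<in>A. Lfun \<theta> (P a))"
  by (induction A rule: infinite_finite_induct) (auto simp: Lfun_add)

lemma poly_mapping_sum_singles:
  "(p :: 'a \<Rightarrow>\<^sub>0 'b::comm_monoid_add) = (\<Sum>a\<in>Poly_Mapping.keys p. Poly_Mapping.single a (Poly_Mapping.lookup p a))"
  by (rule poly_mapping_eqI) (simp add: lookup_sum lookup_single when_def in_keys_iff)

lemma Lfun_mult:
  assumes hom: "\<And>\<alpha> \<beta>. \<theta> (\<alpha> + \<beta>) = \<theta> \<alpha> * \<theta> \<beta>"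
  shows "Lfun \<theta> (p * q) = Lfun \<theta> p * Lfun \<theta> q"
proof -
  let ?P = "Poly_Mapping.keys p" and ?Q = "Poly_Mapping.keys q"
  have "p * q = (\<Sum>a\<in>?P. Poly_Mapping.single a (Poly_Mapping.lookup p a)) *
                (\<Sum>b\<in>?Q. Poly_Mapping.single b (Poly_Mapping.lookup q b))"
    by (subst (1) poly_mapping_sum_singles[of p], subst (1) poly_mapping_sum_singles[of q]) simp
  also have "\<dots> = (\<Sum>a\<in>?P. \<Sum>b\<in>?Q. Poly_Mapping.single (a + b) (Poly_Mapping.lookup p a * Poly_Mapping.lookup q b))"
    by (simp add: sum_distrib_left sum_distrib_right mult_single) (rule sum.swap)
  finally have "Lfun \<theta> (p * q) =
      (\<Sum>a\<in>?P. \<Sum>b\<in>?Q. (Poly_Mapping.lookup p a * \<theta> a) * (Poly_Mapping.lookup q b * \<theta> b))"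
    by (simp add: Lfun_sum hom algebra_simps)
  also have "\<dots> = Lfun \<theta> p * Lfun \<theta> q"
    by (simp add: Lfun_def sum_product)
  finally show ?thesis .
qed

lemma peval_eq_Lfun_meval: "peval q x = Lfun (meval x) q"
  by (simp add: peval_def Lfun_def meval_def)

lemma peval_diff: "peval (p - q) x = peval p x - peval q x"
  by (simp add: peval_eq_Lfun_meval Lfun_diff)

lemma peval_one [simp]: "peval 1 x = 1"
  by (simp add: peval_eq_Lfun_meval)

lemma peval_mult: "peval (p * q) x = peval p x * peval q x"
  by (simp add: peval_eq_Lfun_meval Lfun_mult meval_add)

lemma peval_power: "peval (p ^ n) x = peval p x ^ n"
  by (induction n) (simp_all add: peval_mult)

lemma peval_prod: "peval (\<Prod>a\<in>A. P a) x = (\<Prod>a\<in>A. peval (P a) x)"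
  by (induction A rule: infinite_finite_induct) (simp_all add: peval_mult)

lemma (in vec_space) rank_le_1_minor:
  assumes A: "A \<in> carrier_mat n nc" and rank: "rank A \<le> 1"
    and i: "i < n" "i' < n" and j: "j < nc" "j' < nc"
  shows "A $$ (i, j) * A $$ (i', j') = A $$ (i, j') * A $$ (i', j)"
proof (cases "col A j' = 0\<^sub>v n")
  case True
  have "A $$ (r, j') = 0" if "r < n" for r
  proof -
    have "A $$ (r, j') = col A j' $ r" using A that j by simp
    with True that show ?thesis by simp
  qed
  with i show ?thesis by simp
next
  case False
  let ?u = "col A j'" and ?v = "col A j"
  have u: "?u \<in> carrier_vec n" and v: "?v \<in> carrier_vec n" using A j by auto
  have "lin_indpt {}" unfolding lin_dep_def by auto
  with False u have indpt_u: "lin_indpt {?u}"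
    using lin_dep_iff_in_span[of "{}" ?u] span_empty by auto
  have "?v \<in> span {?u}"
  proof (rule ccontr)
    assume v_out: "?v \<notin> span {?u}"
    then have "?v \<noteq> ?u" using in_own_span[of "{?u}"] u by auto
    have "lin_indpt ({?u} \<union> {?v})"
      using lin_dep_iff_in_span[of "{?u}" ?v] indpt_u u v v_out \<open>?v \<noteq> ?u\<close> by auto
    moreover have "{?u} \<union> {?v} \<subseteq> set (cols A)" using A j by (auto simp: cols_def)
    ultimately have "card ({?u} \<union> {?v}) \<le> rank A" using rank_ge_card_indpt[OF A] by blast
    with rank \<open>?v \<noteq> ?u\<close> show False by simp
  qed
  then obtain a where "lincomb a {?u} = ?v" using finite_in_span[of "{?u}" ?v] u by auto
  then have col_j: "?v = a ?u \<cdot>\<^sub>v ?u" unfolding lincomb_def using u by simp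
  have "A $$ (r, j) = a ?u * A $$ (r, j')" if "r < n" for r
    using arg_cong[OF col_j, of "\<lambda>w. w $ r"] A that j by simp
  then show ?thesis using i by simp
qed

lemma mom_rank_le_1_mult:
  assumes I: "finite I" and rank: "mom_rank I t \<theta> \<le> 1"
    and \<alpha>: "\<alpha> \<in> Iset I t" and \<beta>: "\<beta> \<in> Iset I t"
  shows "\<theta> (\<alpha> + \<beta>) * \<theta> 0 = \<theta> \<alpha> * \<theta> \<beta>"
proof -
  let ?S = "Iset I t" and ?A = "mom_mat I t \<theta>"
  define L where "L = sorted_list_of_set ?S"
  have set_L: "set L = ?S" and len_L: "length L = card ?S"
    using finite_Iset[OF I] by (simp_all add: L_def)
  have A: "?A \<in> carrier_mat (card ?S) (card ?S)"
    and entry: "\<And>a b. a < card ?S \<Longrightarrow> b < card ?S \<Longrightarrow> ?A $$ (a, b) = \<theta> (L ! a + L ! b)"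
    by (simp_all add: mom_mat_def L_def[symmetric] len_L)
  have "0 \<in> ?S" by (simp add: Iset_def)
  then obtain i0 i j where ij: "i0 < card ?S" "i < card ?S" "j < card ?S"
    and "L ! i0 = 0" "L ! i = \<alpha>" "L ! j = \<beta>"
    using \<alpha> \<beta> by (metis set_L len_L in_set_conv_nth)
  moreover have "?A $$ (i, j) * ?A $$ (i0, i0) = ?A $$ (i, i0) * ?A $$ (i0, j)"
    using vec_space.rank_le_1_minor[OF A _ ij(2,1,3,1)] rank by (simp add: mom_rank_def)
  ultimately show ?thesis by (simp add: entry)
qed

lemma multiplicative_moments_eq_meval:
  assumes mult: "\<And>\<alpha> \<beta>. \<alpha> \<in> Iset I t \<Longrightarrow> \<beta> \<in> Iset I t \<Longrightarrow> \<theta> (\<alpha> + \<beta>) = \<theta> \<alpha> * \<theta> \<beta>"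
    and \<theta>0: "\<theta> 0 = 1" and x: "\<And>i. i \<in> I \<Longrightarrow> x i = \<theta> (Poly_Mapping.single i 1)"
    and \<gamma>: "\<gamma> \<in> Iset I (2 * t)"
  shows "\<theta> \<gamma> = meval x \<gamma>"
proof -
  have low: "\<theta> \<alpha> = meval x \<alpha>" if "\<alpha> \<in> Iset I t" for \<alpha>
    using that
  proof (induction "mdeg \<alpha>" arbitrary: \<alpha>)
    case 0
    then show ?case using \<theta>0 by (metis mdeg_eq_0_iff meval_zero)
  next
    case (Suc N)
    then obtain i where i: "i \<in> Poly_Mapping.keys \<alpha>"
      by (metis all_not_in_conv keys_eq_empty mdeg_zero nat.distinct(1))
    define \<alpha>' where "\<alpha>' = \<alpha> - Poly_Mapping.single i 1"
    have \<alpha>_split: "\<alpha> = \<alpha>' + Poly_Mapping.single i 1"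
      using diff_single_add_single[OF i] by (simp add: \<alpha>'_def)
    have "mdeg \<alpha>' = N" using Suc.hyps(2) \<alpha>_split mdeg_add[of \<alpha>' "Poly_Mapping.single i 1"] by simp
    moreover have "i \<in> I" using i Suc.prems by (auto simp: Iset_def)
    ultimately have \<alpha>': "\<alpha>' \<in> Iset I t" and unit: "Poly_Mapping.single i 1 \<in> Iset I t"
      using Suc.hyps(2) Suc.prems \<alpha>_split keys_add_nat[of \<alpha>'] by (auto simp: Iset_def)
    have "\<theta> \<alpha> = \<theta> \<alpha>' * \<theta> (Poly_Mapping.single i 1)"
      by (subst \<alpha>_split) (rule mult[OF \<alpha>' unit])
    also have "\<dots> = meval x \<alpha>"
      using Suc.hyps(1)[OF \<open>mdeg \<alpha>' = N\<close>[symmetric] \<alpha>'] x[OF \<open>i \<in> I\<close>]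
      unfolding \<alpha>_split by (simp add: meval_add)
    finally show ?case .
  qed
  obtain \<alpha> \<beta> where \<gamma>_split: "\<gamma> = \<alpha> + \<beta>" and "mdeg \<alpha> = min t (mdeg \<gamma>)"
    using mdeg_decompose[of "min t (mdeg \<gamma>)" \<gamma>] by auto
  then have "\<alpha> \<in> Iset I t" "\<beta> \<in> Iset I t"
    using \<gamma> keys_add_nat[of \<alpha> \<beta>] mdeg_add[of \<alpha> \<beta>] by (auto simp: Iset_def)
  then show ?thesis by (simp add: \<gamma>_split mult low meval_add)
qed

lemma mdeg_le_pdeg: "\<gamma> \<in> Poly_Mapping.keys q \<Longrightarrow> mdeg \<gamma> \<le> pdeg q"
  unfolding pdeg_def by (rule Max_ge) auto

lemma keys_subset_pvars: "\<gamma> \<in> Poly_Mapping.keys q \<Longrightarrow> Poly_Mapping.keys \<gamma> \<subseteq> pvars q"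
  unfolding pvars_def by blast

lemma omega_degree_bounds:
  shows "pdeg f \<le> 2 * omega m f g"
    and "j \<in> {1..m} \<Longrightarrow> pdeg (g j) \<le> 2 * omega m f g"
proof -
  let ?M = "max (pdeg f) (Max (insert 0 (pdeg ` g ` {1..m})))"
  have "?M \<le> 2 * omega m f g"
    unfolding omega_def by (rule LeastI[where P = "\<lambda>w. ?M \<le> 2 * w" and k = ?M]) (simp only: mult_2 le_add1)
  then show "pdeg f \<le> 2 * omega m f g" and "j \<in> {1..m} \<Longrightarrow> pdeg (g j) \<le> 2 * omega m f g"
    by (auto intro: le_trans[OF Max_ge])
qed

lemma point_evaluation_dual_feasible:
  assumes x: "x \<in> Kset n m g"
  shows "dual_feasible p I J f g m k d (\<lambda>_. meval x) (meval x)"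
  unfolding dual_feasible_def
proof (intro conjI ballI)
  fix l
  show "mom_psd (I l) k (meval x)"
    unfolding mom_psd_def
  proof
    fix v :: "mono \<Rightarrow> real"
    have "(\<Sum>\<alpha>\<in>Iset (I l) k. \<Sum>\<beta>\<in>Iset (I l) k. v \<alpha> * meval x (\<alpha> + \<beta>) * v \<beta>)
        = (\<Sum>\<alpha>\<in>Iset (I l) k. v \<alpha> * meval x \<alpha>)\<^sup>2"
      by (simp add: power2_eq_square meval_add sum_product algebra_simps)
    then show "0 \<le> (\<Sum>\<alpha>\<in>Iset (I l) k. \<Sum>\<beta>\<in>Iset (I l) k. v \<alpha> * meval x (\<alpha> + \<beta>) * v \<beta>)"
      by simp
  qed
  fix \<alpha>\<beta> :: "(nat \<Rightarrow> nat) \<times> (nat \<Rightarrow> nat)"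
  have "0 \<le> peval (g j) x" "peval (g j) x \<le> 1" if "j \<in> {1..m}" for j
    using x that by (auto simp: Kset_def)
  then have "0 \<le> Lfun (meval x) (hab m g \<alpha> \<beta>)" for \<alpha> \<beta>
    unfolding peval_eq_Lfun_meval[symmetric] hab_def peval_prod
    by (intro prod_nonneg) (simp add: peval_mult peval_power peval_diff)
  then show "case \<alpha>\<beta> of (\<alpha>, \<beta>) \<Rightarrow> 0 \<le> Lfun (meval x) (hab m g \<alpha> \<beta>)"
    by (simp split: prod.split)
qed simp_all

lemma qtilde_le_fstar: "qtilde p I J f g m k d \<le> fstar n m f g"
  unfolding fstar_def
proof (rule INF_greatest)
  fix x assume "x \<in> Kset n m g"
  then have "dual_feasible p I J f g m k d (\<lambda>_. meval x) (meval x)"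
    by (rule point_evaluation_dual_feasible)
  then have "qtilde p I J f g m k d \<le> ereal (Lfun (meval x) f)"
    unfolding qtilde_def by (intro INF_lower2[of "(\<lambda>_. meval x, meval x)"]) auto
  then show "qtilde p I J f g m k d \<le> ereal (peval f x)"
    by (simp add: peval_eq_Lfun_meval)
qed

lemma hab_unit:
  assumes "j \<in> {1..m}"
  shows "hab m g (\<lambda>i. if i = j then 1 else 0) (\<lambda>_. 0) = g j"
    and "hab m g (\<lambda>_. 0) (\<lambda>i. if i = j then 1 else 0) = 1 - g j"
proof -
  have "hab m g (\<lambda>i. if i = j then 1 else 0) (\<lambda>_. 0) = (\<Prod>i\<in>{1..m}. if i = j then g i else 1)"
    and "hab m g (\<lambda>_. 0) (\<lambda>i. if i = j then 1 else 0) = (\<Prod>i\<in>{1..m}. if i = j then 1 - g i else 1)"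
    unfolding hab_def by (rule prod.cong; simp)+
  with assms show "hab m g (\<lambda>i. if i = j then 1 else 0) (\<lambda>_. 0) = g j"
    and "hab m g (\<lambda>_. 0) (\<lambda>i. if i = j then 1 else 0) = 1 - g j"
    by simp_all
qed

lemma dual_feasible_localizing_bounds:
  assumes feas: "dual_feasible p I J f g m k d \<theta> y" and l: "l \<in> {1..p}"
    and j: "j \<in> J l" and J: "J l \<subseteq> {1..m}" and d: "1 \<le> d"
  shows "0 \<le> Lfun (\<theta> l) (g j)" and "Lfun (\<theta> l) (g j) \<le> \<theta> l 0"
proof -
  let ?e = "\<lambda>i. if i = j then 1 else (0 :: nat)"
  have "finite (J l)" using J finite_subset by blast
  then have "(?e, \<lambda>_. 0) \<in> Nset (J l) d" "(\<lambda>_. 0, ?e) \<in> Nset (J l) d"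
    using j d by (auto simp: Nset_def)
  with feas l have "0 \<le> Lfun (\<theta> l) (hab m g ?e (\<lambda>_. 0))" "0 \<le> Lfun (\<theta> l) (hab m g (\<lambda>_. 0) ?e)"
    unfolding dual_feasible_def by fast+
  then show "0 \<le> Lfun (\<theta> l) (g j)" and "Lfun (\<theta> l) (g j) \<le> \<theta> l 0"
    using j J by (simp_all add: hab_unit subset_iff Lfun_diff)
qed

lemma rank_1_clique_eq_meval:
  assumes feas: "dual_feasible p I J f g m k d \<theta> y" and l: "l \<in> {1..p}" and k: "1 \<le> k"
    and I: "finite (I l)" and rank: "mom_rank (I l) t (\<theta> l) \<le> 1"
    and x: "\<And>i. i \<in> I l \<Longrightarrow> x i = y (Poly_Mapping.single i 1)"
    and \<gamma>: "\<gamma> \<in> Iset (I l) (2 * t)"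
  shows "\<theta> l \<gamma> = meval x \<gamma>"
proof -
  have moments: "\<theta> l \<gamma>' = y \<gamma>'" if "\<gamma>' \<in> Iset (I l) (dmax f g m k d)" for \<gamma>'
    using feas l that by (simp add: dual_feasible_def)
  have "1 \<le> dmax f g m k d" using k by (simp add: dmax_def)
  then have units: "\<theta> l (Poly_Mapping.single i 1) = y (Poly_Mapping.single i 1)" if "i \<in> I l" for i
    using that by (intro moments) (simp add: Iset_def)
  have \<theta>0: "\<theta> l 0 = 1"
    using moments[of 0] feas by (simp add: Iset_def dual_feasible_def)
  have mult: "\<theta> l (\<alpha> + \<beta>) = \<theta> l \<alpha> * \<theta> l \<beta>" if "\<alpha> \<in> Iset (I l) t" "\<beta> \<in> Iset (I l) t" for \<alpha> \<beta>
    using mom_rank_le_1_mult[OF I rank that] \<theta>0 by simp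
  have "x i = \<theta> l (Poly_Mapping.single i 1)" if "i \<in> I l" for i
    using x[OF that] units[OF that] by simp
  from multiplicative_moments_eq_meval[OF mult \<theta>0 this \<gamma>] show ?thesis .
qed

lemma Lfun_eq_peval_if_moments_agree:
  assumes agree: "\<And>\<gamma>. \<gamma> \<in> Iset I t \<Longrightarrow> \<theta> \<gamma> = meval x \<gamma>"
    and vars: "pvars q \<subseteq> I" and deg: "pdeg q \<le> t"
  shows "Lfun \<theta> q = peval q x"
  unfolding peval_eq_Lfun_meval
proof (intro Lfun_cong agree)
  fix \<gamma> assume "\<gamma> \<in> Poly_Mapping.keys q"
  then show "\<gamma> \<in> Iset I t"
    using keys_subset_pvars[of \<gamma> q] mdeg_le_pdeg[of \<gamma> q] vars deg by (auto simp: Iset_def)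
qed

lemma sparse_dual_value_eq_peval:
  assumes feas: "dual_feasible p I J f g m k d \<theta> y"
    and f_split: "f = (\<Sum>l\<in>{1..p}. fl l)" and fl_vars: "\<forall>l\<in>{1..p}. pvars (fl l) \<subseteq> I l"
    and deg: "pdeg f \<le> t" and t: "t \<le> dmax f g m k d"
    and agree: "\<And>l \<gamma>. l \<in> {1..p} \<Longrightarrow> \<gamma> \<in> Iset (I l) t \<Longrightarrow> \<theta> l \<gamma> = meval x \<gamma>"
  shows "Lfun y f = peval f x"
  unfolding peval_eq_Lfun_meval
proof (rule Lfun_cong)
  fix \<gamma> assume \<gamma>: "\<gamma> \<in> Poly_Mapping.keys f"
  then obtain l where l: "l \<in> {1..p}" and "\<gamma> \<in> Poly_Mapping.keys (fl l)"
    using keys_sum[of fl "{1..p}"] f_split by blast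
  then have "Poly_Mapping.keys \<gamma> \<subseteq> I l"
    using fl_vars keys_subset_pvars by blast
  with mdeg_le_pdeg[OF \<gamma>] deg t
  have "\<gamma> \<in> Iset (I l) t" "\<gamma> \<in> Iset (I l) (dmax f g m k d)"
    by (simp_all add: Iset_def)
  then show "y \<gamma> = meval x \<gamma>"
    using feas l agree[OF l] unfolding dual_feasible_def by metis
qed

lemma sparse_dual_point_in_Kset:
  assumes feas: "dual_feasible p I J f g m k d \<theta> y" and d: "1 \<le> d"
    and J_sub: "\<forall>l\<in>{1..p}. J l \<subseteq> {1..m}" and J_cover: "(\<Union>l\<in>{1..p}. J l) = {1..m}"
    and g_vars: "\<forall>l\<in>{1..p}. \<forall>j\<in>J l. pvars (g j) \<subseteq> I l"
    and deg: "\<forall>j\<in>{1..m}. pdeg (g j) \<le> t"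
    and agree: "\<And>l \<gamma>. l \<in> {1..p} \<Longrightarrow> \<gamma> \<in> Iset (I l) t \<Longrightarrow> \<theta> l \<gamma> = meval x \<gamma>"
    and x: "\<forall>i. i \<notin> {1..n} \<longrightarrow> x i = 0"
  shows "x \<in> Kset n m g"
  unfolding Kset_def
proof (intro CollectI conjI ballI x)
  fix j assume j: "j \<in> {1..m}"
  then obtain l where l: "l \<in> {1..p}" and jl: "j \<in> J l" using J_cover by blast
  have "pvars (g j) \<subseteq> I l" using g_vars l jl by blast
  moreover have "pdeg (g j) \<le> t" using deg j by blast
  ultimately have "Lfun (\<theta> l) (g j) = peval (g j) x"
    using Lfun_eq_peval_if_moments_agree[where \<theta> = "\<theta> l"] agree[OF l] by blast
  moreover have "\<theta> l 0 = 1" using agree[OF l] by (simp add: Iset_def)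
  moreover note dual_feasible_localizing_bounds[OF feas l jl _ d]
  ultimately show "0 \<le> peval (g j) x" "peval (g j) x \<le> 1"
    using J_sub l by simp_all
qed

theorem mainTheorem5:
  fixes n m p k d :: nat
    and f :: mpoly and g :: "nat \<Rightarrow> mpoly"
    and I J :: "nat \<Rightarrow> nat set" and fl :: "nat \<Rightarrow> mpoly"
    and \<theta> :: "nat \<Rightarrow> mono \<Rightarrow> real" and y :: "mono \<Rightarrow> real"
  assumes p_pos: "p \<ge> 1" and k_pos: "k \<ge> 1" and d_pos: "d \<ge> 1"
    and I_sub: "\<forall>l\<in>{1..p}. I l \<subseteq> {1..n}"
    and J_sub: "\<forall>l\<in>{1..p}. J l \<subseteq> {1..m}"
    and f_split: "f = (\<Sum>l\<in>{1..p}. fl l)"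
    and fl_vars: "\<forall>l\<in>{1..p}. pvars (fl l) \<subseteq> I l"
    and g_vars: "\<forall>l\<in>{1..p}. \<forall>j\<in>J l. pvars (g j) \<subseteq> I l"
    and I_cover: "(\<Union>l\<in>{1..p}. I l) = {1..n}"
    and J_cover: "(\<Union>l\<in>{1..p}. J l) = {1..m}"
    and RIP: "\<forall>l\<in>{1..<p}. \<exists>s\<in>{1..l}. I (l + 1) \<inter> (\<Union>r\<in>{1..l}. I r) \<subseteq> I s"
    and omega_le: "2 * omega m f g \<le> dmax f g m k d"
    and feas: "dual_feasible p I J f g m k d \<theta> y"
    and opt: "ereal (Lfun y f) = qtilde p I J f g m k d"
    and rank1: "\<forall>l\<in>{1..p}. mom_rank (I l) (omega m f g) (\<theta> l) = 1"
  shows "qtilde p I J f g m k d = fstar n m f g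
    \<and> (\<lambda>i. if i \<in> {1..n} then y (Poly_Mapping.single i 1) else 0) \<in> Kset n m g
    \<and> ereal (peval f (\<lambda>i. if i \<in> {1..n} then y (Poly_Mapping.single i 1) else 0)) = fstar n m f g"
proof -
  define \<omega> where "\<omega> = omega m f g"
  define x where "x = (\<lambda>i. if i \<in> {1..n} then y (Poly_Mapping.single i 1) else 0)"
  have agree: "\<theta> l \<gamma> = meval x \<gamma>" if "l \<in> {1..p}" "\<gamma> \<in> Iset (I l) (2 * \<omega>)" for l \<gamma>
  proof -
    have "I l \<subseteq> {1..n}" using I_sub that(1) by blast
    then show ?thesis
      using that rank1 finite_subset[of "I l" "{1..n}"]
      by (intro rank_1_clique_eq_meval[OF feas _ k_pos]) (auto simp: x_def \<omega>_def subset_iff)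
  qed
  have "Lfun y f = peval f x"
    using omega_degree_bounds(1) omega_le
    by (intro sparse_dual_value_eq_peval[OF feas f_split fl_vars _ _ agree]) (simp_all add: \<omega>_def)
  moreover have "x \<in> Kset n m g"
    using omega_degree_bounds(2) x_def
    by (intro sparse_dual_point_in_Kset[OF feas d_pos J_sub J_cover g_vars _ agree]) (simp_all add: \<omega>_def)
  moreover have "fstar n m f g \<le> ereal (peval f x)"
    unfolding fstar_def using calculation(2) by (rule INF_lower)
  ultimately show ?thesis
    unfolding x_def[symmetric] using opt qtilde_le_fstar[of p I J f g m k d n] by auto
qed

end
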